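(* With the icosahedral setting of the context, for every $y_0\in\mathcal{I}$ and integers $n\ge2$, \[ \Delta_\kappa q_n(x;y_0)=\frac{\nu(n)}{\nu(n-2)}(\tau+2)\,q_{n-2}(x;y_0), \] and more generally for integers $m\ge1$ with $2m\le n$, \[ \Delta_\kappa^m q_n(x;y_0)=\frac{\nu(n)}{\nu(n-2m)}(\tau+2)^m\,q_{n-2m}(x;y_0). \]
   Context: Let $\tau=(1+\sqrt5)/2$. Vectors in $\mathbb{R}^3$ are row vectors; $\langle x,y\rangle=\sum x_iy_i$. For $v\neq0$, $x\sigma_v=x-2\frac{\langle x,v\rangle}{|v|^2}v$. Let $R_+=\{(2,0,0),(0,2,0),(0,0,2),(\tau,\pm\tau^{-1},\pm1),(\pm1,\tau,\pm\tau^{-1}),(\tau^{-1},\pm1,\tau),(-\tau^{-1},1,\tau),(\tau^{-1},1,-\tau)\}$ (15 vectors, signs independent). For real $\kappa\ge0$ the Dunkl operators are $\mathcal{D}_if(x)=\partial_if(x)+\kappa\sum_{v\in R_+}\frac{f(x)-f(x\sigma_v)}{\langle x,v\rangle}v_i$, and the Dunkl Laplacian is $\Delta_\kappa=\sum_{i=1}^3\mathcal{D}_i^2$. Let $\mathcal{I}=\{(0,\pm\tau,\pm1),(\pm1,0,\pm\tau),(\pm\tau,\pm1,0)\}$. For $y_0\in\mathcal{I}$, $q_n(x;y_0)$ are defined by $\left(1-r\langle x,y_0\rangle\right)^{-1}\prod_{y\in\mathcal{I}}\left(1-r\langle x,y\rangle\right)^{-\kappa}=\sum_{n\ge0}q_n(x;y_0)r^n$.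 Define $\nu(n)=2^n(6\kappa+1)_s(5\kappa+\tfrac12)_t$ with $s=\lfloor n/2\rfloor$, $t=\lfloor (n+1)/2\rfloor$, $(a)_k=a(a+1)\cdots(a+k-1)$. *)

theory Defs
  imports "HOL-Analysis.Analysis"
begin

definition tau :: real where "tau = (1 + sqrt 5) / 2"

definition v3 :: "real \<Rightarrow> real \<Rightarrow> real \<Rightarrow> real^3" where
  "v3 a b c = vector [a, b, c]"

definition refl :: "real^3 \<Rightarrow> real^3 \<Rightarrow> real^3" where
  "refl v x = x - (2 * (x \<bullet> v) / (v \<bullet> v)) *\<^sub>R v"

definition Rplus :: "(real^3) set" where
  "Rplus = {v3 2 0 0, v3 0 2 0, v3 0 0 2}
     \<union> {v3 tau (s * inverse tau) t | s t. s \<in> {-1,1} \<and> t \<in> {-1,1}}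
     \<union> {v3 s tau (t * inverse tau) | s t. s \<in> {-1,1} \<and> t \<in> {-1,1}}
     \<union> {v3 (inverse tau) s tau | s. s \<in> {-1,1}}
     \<union> {v3 (- inverse tau) 1 tau, v3 (inverse tau) 1 (- tau)}"

definition Icos :: "(real^3) set" where
  "Icos = {v3 0 (s * tau) t | s t. s \<in> {-1,1} \<and> t \<in> {-1,1}}
     \<union> {v3 s 0 (t * tau) | s t. s \<in> {-1,1} \<and> t \<in> {-1,1}}
     \<union> {v3 (s * tau) t 0 | s t. s \<in> {-1,1} \<and> t \<in> {-1,1}}"

definition partial :: "3 \<Rightarrow> (real^3 \<Rightarrow> real) \<Rightarrow> real^3 \<Rightarrow> real" where
  "partial i f x = deriv (\<lambda>t. f (x + t *\<^sub>R axis i 1)) 0"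

definition dunkl :: "real \<Rightarrow> 3 \<Rightarrow> (real^3 \<Rightarrow> real) \<Rightarrow> real^3 \<Rightarrow> real" where
  "dunkl \<kappa> i f x = partial i f x
     + \<kappa> * (\<Sum>v\<in>Rplus. (f x - f (refl v x)) / (x \<bullet> v) * (v $ i))"

definition dunkl_lap :: "real \<Rightarrow> (real^3 \<Rightarrow> real) \<Rightarrow> real^3 \<Rightarrow> real" where
  "dunkl_lap \<kappa> f x = (\<Sum>i\<in>(UNIV :: 3 set). dunkl \<kappa> i (dunkl \<kappa> i f) x)"

definition genfun :: "real \<Rightarrow> real^3 \<Rightarrow> real^3 \<Rightarrow> real \<Rightarrow> real" where
  "genfun \<kappa> y0 x r = inverse (1 - r * (x \<bullet> y0))
     * (\<Prod>y\<in>Icos. (1 - r * (x \<bullet> y)) powr (- \<kappa>))"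

text \<open>q_n(x;y0): the n-th coefficient of the power series in r, i.e. the
  n-th Taylor coefficient at r = 0 of the (analytic near 0) generating function.\<close>
definition qpoly :: "real \<Rightarrow> nat \<Rightarrow> real^3 \<Rightarrow> real^3 \<Rightarrow> real" where
  "qpoly \<kappa> n y0 x = (deriv ^^ n) (genfun \<kappa> y0 x) 0 / fact n"

definition nu :: "real \<Rightarrow> nat \<Rightarrow> real" where
  "nu \<kappa> n = 2 ^ n * pochhammer (6 * \<kappa> + 1) (n div 2)
                  * pochhammer (5 * \<kappa> + 1/2) ((n + 1) div 2)"

end

theory Submission
  imports Defs
begin

text \<open>
  The generating function factors as \<open>G(\<langle>x,y0\<rangle>) P(x)\<close> with \<open>G(a) = 1 / (1 - a r)\<close> and
  \<open>P(x)\<close> the product over the icosahedron; regard it as a formal power series in \<open>r\<close> and let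
  the Dunkl operators act coefficientwise. \<open>P\<close> is invariant under the reflections, so each
  difference quotient only sees the factor \<open>G\<close>, and \<open>G(a) - G(b) = (a - b) r G(a) G(b)\<close>.
  Summed over the roots, the difference terms are indexed by the reflections of \<open>y0\<close>, which
  run once through the ten vertices of the icosahedron other than \<open>\<plusminus>y0\<close>. Together with the
  logarithmic derivative of \<open>P\<close> this shows that \<open>D\<^sub>i\<close> maps the series to \<open>y0\<^sub>i r\<close> times the
  series with coefficients \<open>nu_ratio \<kappa> n * q\<^sub>n\<^sub>-\<^sub>1\<close>, where
  \<open>nu_ratio \<kappa> n = n + 10\<kappa> + 2\<kappa>[n even] = \<nu>(n)/\<nu>(n-1)\<close>.
  Hence \<open>D\<^sub>i q\<^sub>n = y0\<^sub>i nu_ratio \<kappa> n q\<^sub>n\<^sub>-\<^sub>1\<close>, and summing \<open>D\<^sub>i\<^sup>2\<close> over \<open>i\<close> produces \<open>|y0|\<^sup>2 = \<tau> + 2\<close>.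
  The finitely many facts about the root system and the icosahedron are checked by exact
  computation in \<open>\<int>[\<tau>]\<close>.
\<close>

section \<open>The ring \<open>\<int>[\<tau>]\<close>\<close>

lemma tau_mult_self: "tau * tau = tau + 1"
  unfolding tau_def by (simp add: field_simps)

lemma inverse_tau: "inverse tau = tau - 1"
  by (rule inverse_unique) (simp add: algebra_simps tau_mult_self)

lemma tau_pos: "tau > 0"
  unfolding tau_def by (simp add: add_pos_nonneg)

text \<open>An element \<open>a + b\<tau>\<close> of \<open>\<int>[\<tau>]\<close> is encoded as the pair \<open>(a, b)\<close>, and a vector of
  \<open>\<int>[\<tau>]\<^sup>3\<close> as a triple of pairs; \<open>\<tau>\<^sup>2 = \<tau> + 1\<close> gives the multiplication.\<close>
definition zt_val :: "int \<times> int \<Rightarrow> real" where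
  "zt_val p = of_int (fst p) + of_int (snd p) * tau"

fun zt_add :: "int \<times> int \<Rightarrow> int \<times> int \<Rightarrow> int \<times> int" where
  "zt_add (a, b) (c, d) = (a + c, b + d)"

fun zt_mult :: "int \<times> int \<Rightarrow> int \<times> int \<Rightarrow> int \<times> int" where
  "zt_mult (a, b) (c, d) = (a * c + b * d, a * d + b * c + b * d)"

fun zt_uminus :: "int \<times> int \<Rightarrow> int \<times> int" where
  "zt_uminus (a, b) = (- a, - b)"

fun zt_half :: "int \<times> int \<Rightarrow> int \<times> int" where
  "zt_half (a, b) = (a div 2, b div 2)"

fun zt_even :: "int \<times> int \<Rightarrow> bool" where
  "zt_even (a, b) \<longleftrightarrow> even a \<and> even b"

lemma zt_val_add [simp]: "zt_val (zt_add p q) = zt_val p + zt_val q"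
  by (cases p, cases q) (simp add: zt_val_def algebra_simps)

lemma zt_val_mult [simp]: "zt_val (zt_mult p q) = zt_val p * zt_val q"
proof -
  obtain a b c d where p: "p = (a, b)" and q: "q = (c, d)" by (cases p, cases q)
  have "zt_val p * zt_val q = a * c + (a * d + b * c) * tau + b * d * (tau * tau)"
    by (simp add: p q zt_val_def algebra_simps)
  then show ?thesis by (simp add: p q zt_val_def tau_mult_self algebra_simps)
qed

lemma zt_val_uminus [simp]: "zt_val (zt_uminus p) = - zt_val p"
  by (cases p) (simp add: zt_val_def)

lemma zt_val_half: "zt_even p \<Longrightarrow> zt_val (zt_half p) = zt_val p / 2"
  by (cases p) (auto simp: zt_val_def zt_half.simps field_simps elim!: evenE)

lemma five_mult_square_eq_square_imp_zero: "(5::int) * b\<^sup>2 = c\<^sup>2 \<Longrightarrow> b = 0"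
proof (induction "nat \<bar>b\<bar>" arbitrary: b c rule: less_induct)
  case less
  have p5: "prime (5::int)" by simp
  have "5 dvd c\<^sup>2" using less.prems by (metis dvd_triv_left)
  then obtain d where d: "c = 5 * d" using p5 prime_dvd_power by blast
  have "b\<^sup>2 = 5 * d\<^sup>2" using less.prems d by (simp add: power2_eq_square)
  then have "5 dvd b\<^sup>2" by simp
  then obtain e where e: "b = 5 * e" using p5 prime_dvd_power by blast
  have "5 * e\<^sup>2 = d\<^sup>2" using \<open>b\<^sup>2 = 5 * d\<^sup>2\<close> e by (simp add: power2_eq_square)
  show "b = 0"
  proof (rule ccontr)
    assume "b \<noteq> 0"
    then have "nat \<bar>e\<bar> < nat \<bar>b\<bar>" using e by auto
    with \<open>5 * e\<^sup>2 = d\<^sup>2\<close> have "e = 0" using less.hyps by blast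
    with e \<open>b \<noteq> 0\<close> show False by simp
  qed
qed

lemma zt_val_eq_0_iff: "zt_val p = 0 \<longleftrightarrow> p = (0, 0)"
proof
  assume h: "zt_val p = 0"
  obtain a b where p: "p = (a, b)" by (cases p)
  have "of_int b * sqrt 5 = - of_int (2 * a + b)"
    using h by (simp add: p zt_val_def tau_def field_simps)
  then have "(of_int b * sqrt 5)\<^sup>2 = (of_int (2 * a + b))\<^sup>2"
    by (metis power2_minus)
  then have "real_of_int (5 * b\<^sup>2) = of_int ((2 * a + b)\<^sup>2)"
    by (simp add: power_mult_distrib)
  then have "5 * b\<^sup>2 = (2 * a + b)\<^sup>2" by linarith
  then have "b = 0" by (rule five_mult_square_eq_square_imp_zero)
  with h show "p = (0, 0)" by (simp add: p zt_val_def)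
qed (simp add: zt_val_def)

lemma zt_val_inject: "zt_val p = zt_val q \<longleftrightarrow> p = q"
proof
  assume "zt_val p = zt_val q"
  then have "zt_val (zt_add p (zt_uminus q)) = 0" by simp
  then have "zt_add p (zt_uminus q) = (0, 0)" by (simp only: zt_val_eq_0_iff)
  then show "p = q" by (cases p, cases q) (simp add: zt_add.simps zt_uminus.simps)
qed simp

declare zt_add.simps zt_mult.simps zt_uminus.simps zt_half.simps [simp del]

lemma v3_eq_iff: "v3 a b c = v3 a' b' c' \<longleftrightarrow> a = a' \<and> b = b' \<and> c = c'"
  by (auto simp: v3_def vec_eq_iff forall_3)

lemma inner_v3: "v3 a b c \<bullet> v3 a' b' c' = a * a' + b * b' + c * c'"
  by (simp add: inner_vec_def sum_3 v3_def)

type_synonym ztvec = "(int \<times> int) \<times> (int \<times> int) \<times> (int \<times> int)"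

fun ztv_val :: "ztvec \<Rightarrow> real^3" where
  "ztv_val (p, q, r) = v3 (zt_val p) (zt_val q) (zt_val r)"

fun ztv_inner :: "ztvec \<Rightarrow> ztvec \<Rightarrow> int \<times> int" where
  "ztv_inner (p, q, r) (p', q', r') = zt_add (zt_add (zt_mult p p') (zt_mult q q')) (zt_mult r r')"

fun ztv_uminus :: "ztvec \<Rightarrow> ztvec" where
  "ztv_uminus (p, q, r) = (zt_uminus p, zt_uminus q, zt_uminus r)"

fun ztv_diff :: "ztvec \<Rightarrow> ztvec \<Rightarrow> ztvec" where
  "ztv_diff (p, q, r) (p', q', r') =
     (zt_add p (zt_uminus p'), zt_add q (zt_uminus q'), zt_add r (zt_uminus r'))"

fun ztv_scale :: "int \<times> int \<Rightarrow> ztvec \<Rightarrow> ztvec" where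
  "ztv_scale c (p, q, r) = (zt_mult c p, zt_mult c q, zt_mult c r)"

text \<open>The reflection in a vector of squared length 4, valid whenever the halving is exact.\<close>
definition ztv_refl :: "ztvec \<Rightarrow> ztvec \<Rightarrow> ztvec" where
  "ztv_refl v y = ztv_diff y (ztv_scale (zt_half (ztv_inner y v)) v)"

lemma ztv_val_inject: "ztv_val u = ztv_val w \<longleftrightarrow> u = w"
  by (cases u rule: prod_cases3, cases w rule: prod_cases3) (simp add: v3_eq_iff zt_val_inject)

lemma inj_ztv_val: "inj ztv_val"
  by (simp add: inj_def ztv_val_inject)

lemma ztv_val_inner: "ztv_val u \<bullet> ztv_val w = zt_val (ztv_inner u w)"
  by (cases u rule: prod_cases3, cases w rule: prod_cases3) (simp add: inner_v3)

lemma ztv_val_uminus: "ztv_val (ztv_uminus u) = - ztv_val u"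
  by (cases u rule: prod_cases3) (simp add: v3_def vec_eq_iff forall_3)

lemma ztv_val_diff: "ztv_val (ztv_diff u w) = ztv_val u - ztv_val w"
  by (cases u rule: prod_cases3, cases w rule: prod_cases3) (simp add: v3_def vec_eq_iff forall_3)

lemma ztv_val_scale: "ztv_val (ztv_scale c u) = zt_val c *\<^sub>R ztv_val u"
  by (cases u rule: prod_cases3) (simp add: v3_def vec_eq_iff forall_3)

declare ztv_val.simps [simp del]

lemma refl_ztv_val:
  assumes "ztv_inner v v = (4, 0)" and "zt_even (ztv_inner y v)"
  shows "refl (ztv_val v) (ztv_val y) = ztv_val (ztv_refl v y)"
proof -
  have "ztv_val v \<bullet> ztv_val v = 4" using assms(1) by (simp add: ztv_val_inner zt_val_def)
  moreover have "zt_val (zt_half (ztv_inner y v)) = (ztv_val y \<bullet> ztv_val v) / 2"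
    using assms(2) by (simp add: zt_val_half ztv_val_inner)
  ultimately show ?thesis by (simp add: refl_def ztv_refl_def ztv_val_diff ztv_val_scale)
qed

section \<open>The root system and the icosahedron\<close>

lemma inner_refl_swap: "refl v x \<bullet> y = x \<bullet> refl v y"
  by (simp add: refl_def inner_diff_left inner_diff_right inner_commute algebra_simps)

lemma refl_refl: "v \<bullet> v \<noteq> 0 \<Longrightarrow> refl v (refl v y) = y"
  by (simp add: refl_def inner_diff_left algebra_simps)

lemma refl_orthogonal: "x \<bullet> v = 0 \<Longrightarrow> refl v x = x"
  by (simp add: refl_def)

definition Icos_list :: "ztvec list" where
  "Icos_list =
    [((0,-1),(-1,0),(0,0)), ((0,-1),(1,0),(0,0)), ((0,1),(-1,0),(0,0)), ((0,1),(1,0),(0,0)),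
     ((-1,0),(0,0),(0,-1)), ((-1,0),(0,0),(0,1)), ((1,0),(0,0),(0,-1)), ((1,0),(0,0),(0,1)),
     ((0,0),(0,-1),(-1,0)), ((0,0),(0,-1),(1,0)), ((0,0),(0,1),(-1,0)), ((0,0),(0,1),(1,0))]"

definition Rplus_list :: "ztvec list" where
  "Rplus_list =
    [((1,-1),(1,0),(0,1)), ((-1,1),(1,0),(0,-1)), ((-1,1),(-1,0),(0,1)), ((-1,1),(1,0),(0,1)),
     ((-1,0),(0,1),(1,-1)), ((-1,0),(0,1),(-1,1)), ((1,0),(0,1),(1,-1)), ((1,0),(0,1),(-1,1)),
     ((0,1),(1,-1),(-1,0)), ((0,1),(1,-1),(1,0)), ((0,1),(-1,1),(-1,0)), ((0,1),(-1,1),(1,0)),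
     ((2,0),(0,0),(0,0)), ((0,0),(2,0),(0,0)), ((0,0),(0,0),(2,0))]"

lemma zt_val_basic [simp]:
  "zt_val (0, 0) = 0" "zt_val (1, 0) = 1" "zt_val (-1, 0) = -1" "zt_val (2, 0) = 2"
  "zt_val (0, 1) = tau" "zt_val (0, -1) = - tau"
  "zt_val (-1, 1) = tau - 1" "zt_val (1, -1) = 1 - tau"
  by (simp_all add: zt_val_def)

lemma Icos_eq_image: "Icos = ztv_val ` set Icos_list"
proof -
  have pm: "{f s t |s t. s \<in> {-1::real, 1} \<and> t \<in> {-1::real, 1}} = {f (-1) (-1), f (-1) 1, f 1 (-1), f 1 1}"
    for f :: "real \<Rightarrow> real \<Rightarrow> real^3" by auto
  show ?thesis unfolding Icos_def Icos_list_def pm by (simp add: ztv_val.simps)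
qed

lemma Rplus_eq_image: "Rplus = ztv_val ` set Rplus_list"
proof -
  have pm2: "{f s t |s t. s \<in> {-1::real, 1} \<and> t \<in> {-1::real, 1}} = {f (-1) (-1), f (-1) 1, f 1 (-1), f 1 1}"
    for f :: "real \<Rightarrow> real \<Rightarrow> real^3" by auto
  have pm1: "{f s |s. s \<in> {-1::real, 1}} = {f (-1), f 1}" for f :: "real \<Rightarrow> real^3" by auto
  show ?thesis unfolding Rplus_def Rplus_list_def pm2 pm1 by (simp add: ztv_val.simps inverse_tau)
qed

lemma Rplus_list_norms: "list_all (\<lambda>v. ztv_inner v v = (4, 0)) Rplus_list"
  by code_simp

lemma Icos_list_norms: "list_all (\<lambda>y. ztv_inner y y = (2, 1)) Icos_list"
  by code_simp

lemma Icos_list_uminus_closed: "list_all (\<lambda>y. ztv_uminus y \<in> set Icos_list) Icos_list"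
  by code_simp

lemma Icos_list_refl_closed:
  "list_all (\<lambda>v. list_all (\<lambda>y. zt_even (ztv_inner y v) \<and> ztv_refl v y \<in> set Icos_list) Icos_list) Rplus_list"
  by code_simp

lemma Rplus_list_refl_closed:
  "list_all (\<lambda>v. list_all (\<lambda>w. zt_even (ztv_inner w v) \<and>
     (ztv_refl v w \<in> set Rplus_list \<or> ztv_uminus (ztv_refl v w) \<in> set Rplus_list)) Rplus_list) Rplus_list"
  by code_simp

lemma Icos_list_refl_orbits:
  "list_all (\<lambda>y0. let A = filter (\<lambda>v. ztv_inner y0 v \<noteq> (0, 0)) Rplus_list in
     distinct (map (\<lambda>v. ztv_refl v y0) A) \<and>
     set (map (\<lambda>v. ztv_refl v y0) A) = set Icos_list - {y0, ztv_uminus y0}) Icos_list"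
  by code_simp

lemma distinct_Icos_list: "distinct Icos_list"
  by code_simp

lemma finite_Icos: "finite Icos"
  by (simp add: Icos_eq_image)

lemma finite_Rplus: "finite Rplus"
  by (simp add: Rplus_eq_image)

lemma card_Icos: "card Icos = 12"
proof -
  have "card Icos = length Icos_list"
    unfolding Icos_eq_image using inj_ztv_val distinct_Icos_list
    by (simp add: card_image inj_on_subset distinct_card)
  then show ?thesis by (simp add: Icos_list_def)
qed

lemma Rplus_inner_self: "v \<in> Rplus \<Longrightarrow> v \<bullet> v = 4"
proof -
  assume "v \<in> Rplus"
  then obtain p where p: "p \<in> set Rplus_list" "v = ztv_val p" by (auto simp: Rplus_eq_image)
  then have "ztv_inner p p = (4, 0)" using Rplus_list_norms by (simp add: list_all_iff)
  then show ?thesis by (simp add: p ztv_val_inner zt_val_def)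
qed

lemma Icos_inner_self: "y \<in> Icos \<Longrightarrow> y \<bullet> y = tau + 2"
proof -
  assume "y \<in> Icos"
  then obtain p where p: "p \<in> set Icos_list" "y = ztv_val p" by (auto simp: Icos_eq_image)
  then have "ztv_inner p p = (2, 1)" using Icos_list_norms by (simp add: list_all_iff)
  then show ?thesis by (simp add: p ztv_val_inner zt_val_def)
qed

lemma uminus_in_Icos: "y \<in> Icos \<Longrightarrow> - y \<in> Icos"
proof -
  assume "y \<in> Icos"
  then obtain p where p: "p \<in> set Icos_list" "y = ztv_val p" by (auto simp: Icos_eq_image)
  then have "ztv_uminus p \<in> set Icos_list" using Icos_list_uminus_closed by (simp add: list_all_iff)
  then show ?thesis by (simp add: p Icos_eq_image flip: ztv_val_uminus)
qed

lemma Icos_neq_uminus: "y \<in> Icos \<Longrightarrow> - y \<noteq> y"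
proof
  assume "y \<in> Icos" "- y = y"
  then have "y \<bullet> y = - (y \<bullet> y)" by (metis inner_minus_left)
  with \<open>y \<in> Icos\<close> show False using Icos_inner_self tau_pos by force
qed

lemma refl_in_Icos: "v \<in> Rplus \<Longrightarrow> y \<in> Icos \<Longrightarrow> refl v y \<in> Icos"
proof -
  assume "v \<in> Rplus" "y \<in> Icos"
  then obtain p q where p: "p \<in> set Rplus_list" "v = ztv_val p"
    and q: "q \<in> set Icos_list" "y = ztv_val q"
    by (auto simp: Rplus_eq_image Icos_eq_image)
  have "ztv_inner p p = (4, 0)" using p Rplus_list_norms by (simp add: list_all_iff)
  moreover have "zt_even (ztv_inner q p) \<and> ztv_refl p q \<in> set Icos_list"
    using p q Icos_list_refl_closed by (simp add: list_all_iff)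
  ultimately show ?thesis by (simp add: p q refl_ztv_val Icos_eq_image)
qed

lemma refl_in_Rplus: "v \<in> Rplus \<Longrightarrow> w \<in> Rplus \<Longrightarrow> refl v w \<in> Rplus \<or> - refl v w \<in> Rplus"
proof -
  assume "v \<in> Rplus" "w \<in> Rplus"
  then obtain p q where p: "p \<in> set Rplus_list" "v = ztv_val p"
    and q: "q \<in> set Rplus_list" "w = ztv_val q"
    by (auto simp: Rplus_eq_image)
  have "ztv_inner p p = (4, 0)" using p Rplus_list_norms by (simp add: list_all_iff)
  moreover have "zt_even (ztv_inner q p) \<and>
      (ztv_refl p q \<in> set Rplus_list \<or> ztv_uminus (ztv_refl p q) \<in> set Rplus_list)"
    using p q Rplus_list_refl_closed by (simp add: list_all_iff)
  ultimately show ?thesis by (auto simp: p q refl_ztv_val Rplus_eq_image simp flip: ztv_val_uminus)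
qed

lemma sum_Icos_remove_antipodal:
  assumes "y0 \<in> Icos"
  shows "sum f Icos = f y0 + f (- y0) + sum f (Icos - {y0, - y0})"
proof -
  have "- y0 \<in> Icos - {y0}" using assms uminus_in_Icos Icos_neq_uminus by auto
  have "sum f Icos = f y0 + sum f (Icos - {y0})"
    using assms finite_Icos by (rule sum.remove[rotated])
  also have "sum f (Icos - {y0}) = f (- y0) + sum f (Icos - {y0} - {- y0})"
    using \<open>- y0 \<in> Icos - {y0}\<close> finite_Icos by (intro sum.remove) auto
  also have "Icos - {y0} - {- y0} = Icos - {y0, - y0}" by auto
  finally show ?thesis by (simp add: add.assoc)
qed

text \<open>The reflections of a vertex \<open>y0\<close> of the icosahedron in the roots not orthogonal
  to it run through the ten vertices other than \<open>\<plusminus>y0\<close>, each exactly once.\<close>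
lemma sum_Rplus_refl:
  fixes H :: "real^3 \<Rightarrow> 'a::comm_monoid_add"
  assumes "y0 \<in> Icos" and "H y0 = 0"
  shows "(\<Sum>v\<in>Rplus. H (refl v y0)) = (\<Sum>y\<in>Icos - {y0, - y0}. H y)"
proof -
  obtain p0 where p0: "p0 \<in> set Icos_list" "y0 = ztv_val p0"
    using assms(1) by (auto simp: Icos_eq_image)
  define A where "A = filter (\<lambda>v. ztv_inner p0 v \<noteq> (0, 0)) Rplus_list"
  have orbit: "inj_on (\<lambda>v. ztv_refl v p0) (set A)"
    "(\<lambda>v. ztv_refl v p0) ` set A = set Icos_list - {p0, ztv_uminus p0}"
    using Icos_list_refl_orbits p0(1) by (simp_all add: list_all_iff A_def Let_def distinct_map)
  have refl_eq: "refl (ztv_val v) y0 = ztv_val (ztv_refl v p0)" if "v \<in> set A" for v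
  proof -
    have "ztv_inner v v = (4, 0)" using that Rplus_list_norms by (simp add: A_def list_all_iff)
    moreover have "zt_even (ztv_inner p0 v)"
      using that p0(1) Icos_list_refl_closed by (simp add: A_def list_all_iff)
    ultimately show ?thesis by (simp add: p0 refl_ztv_val)
  qed
  have "(\<Sum>v\<in>Rplus. H (refl v y0)) = (\<Sum>v\<in>ztv_val ` set A. H (refl v y0))"
  proof (rule sum.mono_neutral_right[OF finite_Rplus])
    show "ztv_val ` set A \<subseteq> Rplus" by (auto simp: A_def Rplus_eq_image)
    show "\<forall>v\<in>Rplus - ztv_val ` set A. H (refl v y0) = 0"
    proof
      fix v assume v: "v \<in> Rplus - ztv_val ` set A"
      then obtain p where p: "p \<in> set Rplus_list" "v = ztv_val p"
        by (auto simp: Rplus_eq_image)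
      with v have "p \<notin> set A" by blast
      with p have "ztv_inner p0 p = (0, 0)" by (simp add: A_def)
      then have "y0 \<bullet> v = 0" by (simp add: p0 p ztv_val_inner zt_val_def)
      then show "H (refl v y0) = 0" by (simp add: refl_orthogonal assms(2))
    qed
  qed
  also have "\<dots> = (\<Sum>v\<in>set A. H (ztv_val (ztv_refl v p0)))"
    by (simp add: sum.reindex inj_on_subset[OF inj_ztv_val] refl_eq)
  also have "\<dots> = (\<Sum>w\<in>set Icos_list - {p0, ztv_uminus p0}. H (ztv_val w))"
    using sum.reindex[OF orbit(1), of "\<lambda>w. H (ztv_val w)"] orbit(2) by simp
  also have "\<dots> = (\<Sum>y\<in>ztv_val ` (set Icos_list - {p0, ztv_uminus p0}). H y)"
    by (simp add: sum.reindex inj_on_subset[OF inj_ztv_val])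
  also have "ztv_val ` (set Icos_list - {p0, ztv_uminus p0}) = Icos - {y0, - y0}"
    by (simp add: Icos_eq_image p0 image_set_diff[OF inj_ztv_val] ztv_val_uminus)
  finally show ?thesis .
qed

definition regular :: "real^3 \<Rightarrow> bool" where
  "regular x \<longleftrightarrow> (\<forall>v\<in>Rplus. x \<bullet> v \<noteq> 0)"

lemma regular_refl: "regular x \<Longrightarrow> v \<in> Rplus \<Longrightarrow> regular (refl v x)"
  unfolding regular_def inner_refl_swap
  by (metis inner_minus_right neg_equal_0_iff_equal refl_in_Rplus)

section \<open>The power series of \<open>(1 - a r) powr -\<kappa>\<close>\<close>

notation fps_nth (infixl "$$" 75)

lemma fps_cX_mult_nth:
  "(fps_const (c::real) * fps_X * f) $$ k = (if k = 0 then 0 else c * f $$ (k - 1))"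
  by (simp only: mult.assoc fps_mult_left_const_nth fps_X_mult_nth) simp

lemma fps_one_minus_cX_mult_nth:
  "((1 - fps_const (c::real) * fps_X) * f) $$ k = f $$ k - (if k = 0 then 0 else c * f $$ (k - 1))"
  by (simp add: algebra_simps fps_cX_mult_nth del: fps_mult_left_const_nth)

definition neg_binomial_fps :: "real \<Rightarrow> real \<Rightarrow> real fps" where
  "neg_binomial_fps \<kappa> a = Abs_fps (\<lambda>k. pochhammer \<kappa> k / fact k * a ^ k)"

lemma neg_binomial_fps_nth: "neg_binomial_fps \<kappa> a $$ k = pochhammer \<kappa> k / fact k * a ^ k"
  by (simp add: neg_binomial_fps_def)

lemma neg_binomial_fps_0: "neg_binomial_fps 0 a = 1"
  by (rule fps_ext) (simp add: neg_binomial_fps_nth pochhammer_0_left)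

lemma neg_binomial_fps_shift:
  "(1 - fps_const a * fps_X) * neg_binomial_fps (\<kappa> + 1) a = neg_binomial_fps \<kappa> a"
proof (rule fps_ext)
  fix k
  show "((1 - fps_const a * fps_X) * neg_binomial_fps (\<kappa> + 1) a) $$ k = neg_binomial_fps \<kappa> a $$ k"
  proof (cases k)
    case (Suc j)
    have "pochhammer (\<kappa> + 1) (Suc j) = (\<kappa> + 1 + of_nat j) * pochhammer (\<kappa> + 1) j"
      "pochhammer \<kappa> (Suc j) = \<kappa> * pochhammer (\<kappa> + 1) j"
      "fact (Suc j) = (of_nat j + 1) * (fact j :: real)"
      by (rule pochhammer_rec', rule pochhammer_rec, simp)
    then have "pochhammer (\<kappa> + 1) (Suc j) / fact (Suc j) - pochhammer (\<kappa> + 1) j / fact j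
        = pochhammer \<kappa> (Suc j) / fact (Suc j)"
      by (simp add: divide_simps del: fact_Suc) (simp add: algebra_simps)
    then show ?thesis
      by (simp add: Suc fps_one_minus_cX_mult_nth neg_binomial_fps_nth algebra_simps del: fact_Suc)
  qed (simp add: fps_one_minus_cX_mult_nth neg_binomial_fps_nth)
qed

lemma neg_binomial_fps_geometric: "(1 - fps_const a * fps_X) * neg_binomial_fps 1 a = 1"
  using neg_binomial_fps_shift[of a 0] by (simp add: neg_binomial_fps_0)

lemma neg_binomial_fps_plus_1:
  "neg_binomial_fps (\<kappa> + 1) a = neg_binomial_fps \<kappa> a * neg_binomial_fps 1 a"
  by (metis (no_types, lifting) mult.assoc mult.commute mult_1 neg_binomial_fps_geometric
      neg_binomial_fps_shift)

lemma fps_deriv_neg_binomial_fps: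
  "fps_deriv (neg_binomial_fps \<kappa> a) = fps_const (\<kappa> * a) * neg_binomial_fps (\<kappa> + 1) a"
proof (rule fps_ext)
  fix k
  have "pochhammer \<kappa> (Suc k) = \<kappa> * pochhammer (\<kappa> + 1) k"
    by (rule pochhammer_rec)
  then show "fps_deriv (neg_binomial_fps \<kappa> a) $$ k = (fps_const (\<kappa> * a) * neg_binomial_fps (\<kappa> + 1) a) $$ k"
    by (simp add: neg_binomial_fps_nth field_simps del: of_nat_Suc)
qed

lemma has_real_derivative_neg_binomial_fps_nth:
  "((\<lambda>t. neg_binomial_fps \<kappa> (a + t * c) $$ k) has_real_derivative
     (fps_const (\<kappa> * c) * fps_X * neg_binomial_fps (\<kappa> + 1) a) $$ k) (at 0)"
proof -
  have "((\<lambda>t. pochhammer \<kappa> k / fact k * (a + t * c) ^ k) has_real_derivative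
      pochhammer \<kappa> k / fact k * (of_nat k * (a + 0 * c) ^ (k - 1) * c)) (at 0)"
    by (auto intro!: derivative_eq_intros)
  moreover have "pochhammer \<kappa> k / fact k * (of_nat k * a ^ (k - 1) * c)
      = (fps_const (\<kappa> * c) * fps_X * neg_binomial_fps (\<kappa> + 1) a) $$ k"
  proof (cases k)
    case (Suc j)
    have "pochhammer \<kappa> (Suc j) = \<kappa> * pochhammer (\<kappa> + 1) j"
      by (rule pochhammer_rec)
    then show ?thesis
      by (simp add: Suc fps_cX_mult_nth neg_binomial_fps_nth field_simps del: of_nat_Suc)
  qed (simp add: fps_cX_mult_nth)
  ultimately show ?thesis by (simp add: neg_binomial_fps_nth)
qed

lemma geometric_fps_diff:
  "neg_binomial_fps 1 a - neg_binomial_fps 1 b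
     = fps_const (a - b) * fps_X * neg_binomial_fps 1 a * neg_binomial_fps 1 b"
proof -
  let ?G = "neg_binomial_fps 1" and ?E = "\<lambda>c. 1 - fps_const c * fps_X"
  have "?G a - ?G b = ?G a * (?E b * ?G b) - ?G b * (?E a * ?G a)"
    by (simp only: neg_binomial_fps_geometric mult_1_right)
  also have "\<dots> = (?E b - ?E a) * ?G a * ?G b" by (simp add: algebra_simps)
  also have "?E b - ?E a = fps_const (a - b) * fps_X" by (simp add: algebra_simps)
  finally show ?thesis .
qed

lemma geometric_fps_cX: "fps_const a * fps_X * neg_binomial_fps 1 a = neg_binomial_fps 1 a - 1"
  using neg_binomial_fps_geometric[of a] by (simp add: algebra_simps)

lemma geometric_fps_antipodal:
  "2 * (neg_binomial_fps 1 a * neg_binomial_fps 1 (- a)) = neg_binomial_fps 1 a + neg_binomial_fps 1 (- a)"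
proof -
  let ?G = "neg_binomial_fps 1" and ?E = "\<lambda>c. 1 - fps_const c * fps_X"
  have "?G a + ?G (- a) = ?G a * (?E (- a) * ?G (- a)) + ?G (- a) * (?E a * ?G a)"
    by (simp only: neg_binomial_fps_geometric mult_1_right)
  also have "\<dots> = (?E a + ?E (- a)) * (?G a * ?G (- a))" by (simp add: algebra_simps)
  also have "?E a + ?E (- a) = 2" by simp
  finally show ?thesis by (rule sym)
qed

lemma neg_binomial_fps_compose_uminus:
  "neg_binomial_fps \<kappa> a oo - fps_X = neg_binomial_fps \<kappa> (- a)"
  by (rule fps_ext) (simp add: fps_compose_uminus' neg_binomial_fps_nth power_minus[of a] mult_ac)

lemma fps_deriv_prod_log:
  fixes F :: "'i \<Rightarrow> 'a::comm_ring_1 fps"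
  assumes "finite S" and "\<And>y. y \<in> S \<Longrightarrow> fps_deriv (F y) = F y * L y"
  shows "fps_deriv (\<Prod>y\<in>S. F y) = (\<Prod>y\<in>S. F y) * (\<Sum>y\<in>S. L y)"
  using assms by (induction S rule: finite_induct) (simp_all add: algebra_simps)

text \<open>The library proves this for complex power series only.\<close>
lemma fps_nth_fps_expansion_real_normed_field:
  fixes F :: "'a::{banach, real_normed_field} fps"
  assumes "f has_fps_expansion F"
  shows "F $$ n = (deriv ^^ n) f 0 / fact n"
proof -
  have "G $$ n = (deriv ^^ n) (eval_fps G) 0 / fact n" if "fps_conv_radius G > 0" for G :: "'a fps"
    using that
  proof (induction n arbitrary: G)
    case 0
    then show ?case by (simp add: eval_fps_def)
  next
    case (Suc n)
    have "eventually (\<lambda>z. z \<in> eball 0 (fps_conv_radius G)) (nhds (0::'a))"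
      using Suc.prems by (intro eventually_nhds_in_open) (auto simp: zero_ereal_def)
    then have "eventually (\<lambda>z. deriv (eval_fps G) z = eval_fps (fps_deriv G) z) (nhds 0)"
      by eventually_elim (simp add: eval_fps_deriv)
    then have "(deriv ^^ Suc n) (eval_fps G) 0 = (deriv ^^ n) (eval_fps (fps_deriv G)) 0"
      unfolding funpow_Suc_right o_def by (intro higher_deriv_cong_ev refl)
    moreover have "fps_deriv G $$ n = (deriv ^^ n) (eval_fps (fps_deriv G)) 0 / fact n"
      using Suc.prems fps_conv_radius_deriv[of G] by (intro Suc.IH) auto
    ultimately show ?case by (simp add: fps_deriv_def field_split_simps del: of_nat_Suc)
  qed
  moreover have "(deriv ^^ n) (eval_fps F) 0 = (deriv ^^ n) f 0"
    using assms by (intro higher_deriv_cong_ev) (auto simp: has_fps_expansion_def)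
  ultimately show ?thesis using assms by (simp add: has_fps_expansion_def)
qed

lemma neg_binomial_fps_sums:
  assumes "\<bar>r * a\<bar> < 1"
  shows "(\<lambda>n. neg_binomial_fps \<kappa> a $$ n * r ^ n) sums ((1 - r * a) powr (- \<kappa>))"
proof -
  have "(\<lambda>n. ((- \<kappa>) gchoose n) * (- (r * a)) ^ n) sums ((1 + (- (r * a))) powr (- \<kappa>))"
    using assms by (intro gen_binomial_real) simp
  moreover have "((- \<kappa>) gchoose n) * (- (r * a)) ^ n = neg_binomial_fps \<kappa> a $$ n * r ^ n" for n
  proof -
    have "((- \<kappa>) gchoose n) * (- (r * a)) ^ n
        = ((- 1) ^ n * (- 1) ^ n) * (pochhammer \<kappa> n / fact n) * (r ^ n * a ^ n)"
      by (simp add: gbinomial_pochhammer power_minus[of "r * a"] power_mult_distrib)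
    also have "(- 1 :: real) ^ n * (- 1) ^ n = 1" by (simp flip: power_add)
    finally show ?thesis by (simp add: neg_binomial_fps_nth)
  qed
  ultimately show ?thesis by simp
qed

lemma has_fps_expansion_neg_binomial:
  "(\<lambda>r. (1 - r * a) powr (- \<kappa>)) has_fps_expansion neg_binomial_fps \<kappa> a"
proof -
  define d where "d = 1 / (\<bar>a\<bar> + 1)"
  have a1: "\<bar>a\<bar> + 1 > 0" by (simp add: add_nonneg_pos)
  then have "d > 0" by (simp add: d_def)
  have small: "\<bar>r * a\<bar> < 1" if "\<bar>r\<bar> < d" for r
  proof -
    have "\<bar>r * a\<bar> \<le> \<bar>r\<bar> * (\<bar>a\<bar> + 1)" by (simp add: abs_mult mult_left_mono)
    also have "\<dots> < d * (\<bar>a\<bar> + 1)" using that a1 by (intro mult_strict_right_mono) auto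
    also have "\<dots> = 1" using a1 by (simp add: d_def)
    finally show ?thesis .
  qed
  have "\<bar>d / 2\<bar> < d" using \<open>d > 0\<close> by simp
  then have "summable (\<lambda>n. neg_binomial_fps \<kappa> a $$ n * (d / 2) ^ n)"
    using neg_binomial_fps_sums small sums_summable by blast
  then have "ereal (norm (d / 2)) \<le> fps_conv_radius (neg_binomial_fps \<kappa> a)"
    unfolding fps_conv_radius_def by (rule conv_radius_geI)
  moreover have "0 < ereal (norm (d / 2))" using \<open>d > 0\<close> by simp
  ultimately have "fps_conv_radius (neg_binomial_fps \<kappa> a) > 0" by (meson less_le_trans)
  moreover have "eventually (\<lambda>r. r \<in> ball 0 d) (nhds (0::real))"
    using \<open>d > 0\<close> by (intro eventually_nhds_in_open) auto
  then have "eventually (\<lambda>r. eval_fps (neg_binomial_fps \<kappa> a) r = (1 - r * a) powr (- \<kappa>)) (nhds 0)"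
  proof eventually_elim
    case (elim r)
    then have "(\<lambda>n. neg_binomial_fps \<kappa> a $$ n * r ^ n) sums ((1 - r * a) powr (- \<kappa>))"
      using small neg_binomial_fps_sums by (simp add: dist_real_def)
    then show ?case by (simp add: eval_fps_def sums_iff)
  qed
  ultimately show ?thesis by (simp add: has_fps_expansion_def)
qed

lemma has_fps_expansion_geometric:
  "(\<lambda>r. inverse (1 - r * a)) has_fps_expansion neg_binomial_fps 1 a"
proof -
  have "eventually (\<lambda>r. r \<in> ball 0 (1 / (\<bar>a\<bar> + 1))) (nhds (0::real))"
    by (intro eventually_nhds_in_open) (auto simp: add_pos_nonneg)
  then have "eventually (\<lambda>r. (1 - r * a) powr (- 1) = inverse (1 - r * a)) (nhds 0)"
  proof eventually_elim
    case (elim r)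
    then have "\<bar>r\<bar> * (\<bar>a\<bar> + 1) < 1" by (simp add: field_simps add_pos_nonneg)
    moreover have "\<bar>r\<bar> * \<bar>a\<bar> \<le> \<bar>r\<bar> * (\<bar>a\<bar> + 1)" by (simp add: mult_left_mono)
    ultimately have "\<bar>r * a\<bar> < 1" by (simp add: abs_mult)
    then have "1 - r * a > 0" by (simp add: abs_less_iff)
    then show ?case by (simp add: powr_minus)
  qed
  moreover have "(\<lambda>r. (1 - r * a) powr (- 1)) has_fps_expansion neg_binomial_fps 1 a"
    by (rule has_fps_expansion_neg_binomial)
  ultimately show ?thesis unfolding has_fps_expansion_def by (auto elim: eventually_elim2)
qed

section \<open>The generating series and its partial derivatives\<close>

definition has_coeffwise_deriv :: "(real \<Rightarrow> real fps) \<Rightarrow> real fps \<Rightarrow> bool" where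
  "has_coeffwise_deriv F F' \<longleftrightarrow> (\<forall>k. ((\<lambda>t. F t $$ k) has_real_derivative F' $$ k) (at 0))"

lemma has_coeffwise_deriv_mult:
  assumes "has_coeffwise_deriv F F'" and "has_coeffwise_deriv H H'"
  shows "has_coeffwise_deriv (\<lambda>t. F t * H t) (F' * H 0 + F 0 * H')"
  unfolding has_coeffwise_deriv_def
proof
  fix k
  have "((\<lambda>t. \<Sum>i=0..k. F t $$ i * H t $$ (k - i)) has_real_derivative
      (\<Sum>i=0..k. F' $$ i * H 0 $$ (k - i) + H' $$ (k - i) * F 0 $$ i)) (at 0)"
    using assms unfolding has_coeffwise_deriv_def by (intro DERIV_sum DERIV_mult) auto
  moreover have "(F' * H 0 + F 0 * H') $$ k = (\<Sum>i=0..k. F' $$ i * H 0 $$ (k - i) + H' $$ (k - i) * F 0 $$ i)"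
    by (simp only: fps_add_nth fps_mult_nth sum.distrib) (simp add: mult.commute)
  ultimately show "((\<lambda>t. (F t * H t) $$ k) has_real_derivative (F' * H 0 + F 0 * H') $$ k) (at 0)"
    by (simp add: fps_mult_nth)
qed

lemma has_coeffwise_deriv_prod:
  assumes "finite S" and "\<And>y. y \<in> S \<Longrightarrow> has_coeffwise_deriv (F y) (F y 0 * L y)"
  shows "has_coeffwise_deriv (\<lambda>t. \<Prod>y\<in>S. F y t) ((\<Prod>y\<in>S. F y 0) * (\<Sum>y\<in>S. L y))"
  using assms
proof (induction S rule: finite_induct)
  case empty
  then show ?case by (simp add: has_coeffwise_deriv_def)
next
  case (insert y S)
  then have "has_coeffwise_deriv (\<lambda>t. F y t * (\<Prod>y\<in>S. F y t))
      (F y 0 * L y * (\<Prod>y\<in>S. F y 0) + F y 0 * ((\<Prod>y\<in>S. F y 0) * (\<Sum>y\<in>S. L y)))"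
    by (intro has_coeffwise_deriv_mult[where F = "F y", of _ "\<lambda>t. \<Prod>y\<in>S. F y t", simplified]) auto
  with insert show ?case by (simp add: algebra_simps)
qed

lemma inner_add_axis_left: "(x + t *\<^sub>R axis i 1) \<bullet> y = x \<bullet> y + t * y $ i"
  by (simp add: inner_add_left inner_axis')

lemma has_coeffwise_deriv_neg_binomial_fps:
  "has_coeffwise_deriv (\<lambda>t. neg_binomial_fps \<kappa> ((x + t *\<^sub>R axis i 1) \<bullet> y))
     (neg_binomial_fps \<kappa> (x \<bullet> y) * (fps_const (\<kappa> * y $ i) * fps_X * neg_binomial_fps 1 (x \<bullet> y)))"
proof -
  have "fps_const (\<kappa> * y $ i) * fps_X * neg_binomial_fps (\<kappa> + 1) (x \<bullet> y)
      = neg_binomial_fps \<kappa> (x \<bullet> y) * (fps_const (\<kappa> * y $ i) * fps_X * neg_binomial_fps 1 (x \<bullet> y))"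
    by (simp add: neg_binomial_fps_plus_1 mult_ac)
  then show ?thesis
    unfolding has_coeffwise_deriv_def inner_add_axis_left
    by (metis has_real_derivative_neg_binomial_fps_nth)
qed

definition icos_prod_fps :: "real \<Rightarrow> real^3 \<Rightarrow> real fps" where
  "icos_prod_fps \<kappa> x = (\<Prod>y\<in>Icos. neg_binomial_fps \<kappa> (x \<bullet> y))"

definition gen_fps :: "real \<Rightarrow> real^3 \<Rightarrow> real^3 \<Rightarrow> real fps" where
  "gen_fps \<kappa> y0 x = neg_binomial_fps 1 (x \<bullet> y0) * icos_prod_fps \<kappa> x"

lemma qpoly_eq_gen_fps_nth: "qpoly \<kappa> n y0 x = gen_fps \<kappa> y0 x $$ n"
proof -
  have "genfun \<kappa> y0 x has_fps_expansion gen_fps \<kappa> y0 x"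
    unfolding genfun_def[abs_def] gen_fps_def icos_prod_fps_def
    by (intro has_fps_expansion_mult has_fps_expansion_prod has_fps_expansion_geometric
        has_fps_expansion_neg_binomial)
  then show ?thesis
    unfolding qpoly_def by (rule fps_nth_fps_expansion_real_normed_field[symmetric])
qed

definition gen_fps_partial :: "real \<Rightarrow> real^3 \<Rightarrow> 3 \<Rightarrow> real^3 \<Rightarrow> real fps" where
  "gen_fps_partial \<kappa> y0 i x = fps_X * gen_fps \<kappa> y0 x *
     (fps_const (y0 $ i) * neg_binomial_fps 1 (x \<bullet> y0)
      + fps_const \<kappa> * (\<Sum>y\<in>Icos. fps_const (y $ i) * neg_binomial_fps 1 (x \<bullet> y)))"

lemma has_coeffwise_deriv_gen_fps:
  "has_coeffwise_deriv (\<lambda>t. gen_fps \<kappa> y0 (x + t *\<^sub>R axis i 1)) (gen_fps_partial \<kappa> y0 i x)"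
proof -
  have "has_coeffwise_deriv (\<lambda>t. icos_prod_fps \<kappa> (x + t *\<^sub>R axis i 1))
      (icos_prod_fps \<kappa> x * (\<Sum>y\<in>Icos. fps_const (\<kappa> * y $ i) * fps_X * neg_binomial_fps 1 (x \<bullet> y)))"
    unfolding icos_prod_fps_def
    by (rule has_coeffwise_deriv_prod[OF finite_Icos,
          where F = "\<lambda>y t. neg_binomial_fps \<kappa> ((x + t *\<^sub>R axis i 1) \<bullet> y)"
          and L = "\<lambda>y. fps_const (\<kappa> * y $ i) * fps_X * neg_binomial_fps 1 (x \<bullet> y)", simplified])
      (rule has_coeffwise_deriv_neg_binomial_fps)
  from has_coeffwise_deriv_mult[OF has_coeffwise_deriv_neg_binomial_fps[of 1 x i y0] this]
  have "has_coeffwise_deriv (\<lambda>t. gen_fps \<kappa> y0 (x + t *\<^sub>R axis i 1))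
      (neg_binomial_fps 1 (x \<bullet> y0) * (fps_const (1 * y0 $ i) * fps_X * neg_binomial_fps 1 (x \<bullet> y0))
         * icos_prod_fps \<kappa> (x + 0 *\<^sub>R axis i 1)
       + neg_binomial_fps 1 ((x + 0 *\<^sub>R axis i 1) \<bullet> y0) * (icos_prod_fps \<kappa> x *
         (\<Sum>y\<in>Icos. fps_const (\<kappa> * y $ i) * fps_X * neg_binomial_fps 1 (x \<bullet> y))))"
    unfolding gen_fps_def .
  also have "neg_binomial_fps 1 (x \<bullet> y0) * (fps_const (1 * y0 $ i) * fps_X * neg_binomial_fps 1 (x \<bullet> y0))
         * icos_prod_fps \<kappa> (x + 0 *\<^sub>R axis i 1)
       + neg_binomial_fps 1 ((x + 0 *\<^sub>R axis i 1) \<bullet> y0) * (icos_prod_fps \<kappa> x *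
         (\<Sum>y\<in>Icos. fps_const (\<kappa> * y $ i) * fps_X * neg_binomial_fps 1 (x \<bullet> y)))
      = gen_fps_partial \<kappa> y0 i x"
    by (simp add: gen_fps_partial_def gen_fps_def algebra_simps sum_distrib_left flip: fps_const_mult)
  finally show ?thesis .
qed

lemma partial_scaled_gen_fps_nth:
  "partial i (\<lambda>z. c * gen_fps \<kappa> y0 z $$ n) x = c * gen_fps_partial \<kappa> y0 i x $$ n"
proof -
  have "((\<lambda>t. gen_fps \<kappa> y0 (x + t *\<^sub>R axis i 1) $$ n) has_real_derivative gen_fps_partial \<kappa> y0 i x $$ n) (at 0)"
    using has_coeffwise_deriv_gen_fps unfolding has_coeffwise_deriv_def by blast
  then show ?thesis
    unfolding partial_def by (intro DERIV_imp_deriv DERIV_cmult)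
qed

section \<open>Dunkl operators on the generating series\<close>

lemma icos_prod_fps_refl: "v \<in> Rplus \<Longrightarrow> icos_prod_fps \<kappa> (refl v x) = icos_prod_fps \<kappa> x"
  unfolding icos_prod_fps_def inner_refl_swap
  by (rule prod.reindex_bij_witness[where i = "refl v" and j = "refl v"])
    (auto simp: refl_refl Rplus_inner_self refl_in_Icos)

lemma icos_prod_fps_compose_uminus: "icos_prod_fps \<kappa> x oo - fps_X = icos_prod_fps \<kappa> x"
proof -
  have "icos_prod_fps \<kappa> x oo - fps_X = (\<Prod>y\<in>Icos. neg_binomial_fps \<kappa> (x \<bullet> - y))"
    by (simp add: icos_prod_fps_def fps_compose_prod_distrib neg_binomial_fps_compose_uminus)
  also have "\<dots> = icos_prod_fps \<kappa> x"
    unfolding icos_prod_fps_def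
    by (rule prod.reindex_bij_witness[where i = uminus and j = uminus]) (auto simp: uminus_in_Icos)
  finally show ?thesis .
qed

lemma fps_X_mult_deriv_icos_prod_fps:
  "fps_X * fps_deriv (icos_prod_fps \<kappa> x)
     = fps_const \<kappa> * icos_prod_fps \<kappa> x * ((\<Sum>y\<in>Icos. neg_binomial_fps 1 (x \<bullet> y)) - 12)"
proof -
  have "fps_deriv (icos_prod_fps \<kappa> x)
      = icos_prod_fps \<kappa> x * (\<Sum>y\<in>Icos. fps_const \<kappa> * (fps_const (x \<bullet> y) * neg_binomial_fps 1 (x \<bullet> y)))"
    unfolding icos_prod_fps_def
    by (rule fps_deriv_prod_log[OF finite_Icos])
      (simp add: fps_deriv_neg_binomial_fps neg_binomial_fps_plus_1 mult_ac flip: fps_const_mult)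
  also have "fps_X * \<dots> = fps_const \<kappa> * icos_prod_fps \<kappa> x *
      (\<Sum>y\<in>Icos. fps_const (x \<bullet> y) * fps_X * neg_binomial_fps 1 (x \<bullet> y))"
    by (simp add: sum_distrib_left mult_ac)
  also have "(\<Sum>y\<in>Icos. fps_const (x \<bullet> y) * fps_X * neg_binomial_fps 1 (x \<bullet> y))
      = (\<Sum>y\<in>Icos. neg_binomial_fps 1 (x \<bullet> y)) - 12"
    by (simp add: geometric_fps_cX sum_subtractf card_Icos)
  finally show ?thesis .
qed

lemma gen_fps_refl_diff:
  assumes v: "v \<in> Rplus" and "x \<bullet> v \<noteq> 0"
  shows "fps_const (\<kappa> * v $ i / (x \<bullet> v)) * (gen_fps \<kappa> y0 x - gen_fps \<kappa> y0 (refl v x))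
    = fps_const \<kappa> * fps_X * gen_fps \<kappa> y0 x *
      (fps_const ((y0 - refl v y0) $ i) * neg_binomial_fps 1 (x \<bullet> refl v y0))"
proof -
  define c where "c = 2 * (y0 \<bullet> v) / (v \<bullet> v)"
  have "x \<bullet> y0 - x \<bullet> refl v y0 = c * (x \<bullet> v)" "(y0 - refl v y0) $ i = c * v $ i"
    by (simp_all add: c_def refl_def inner_diff_right)
  then have coeff: "\<kappa> * v $ i / (x \<bullet> v) * (x \<bullet> y0 - x \<bullet> refl v y0) = \<kappa> * (y0 - refl v y0) $ i"
    using assms(2) by simp
  have "gen_fps \<kappa> y0 x - gen_fps \<kappa> y0 (refl v x)
      = (neg_binomial_fps 1 (x \<bullet> y0) - neg_binomial_fps 1 (x \<bullet> refl v y0)) * icos_prod_fps \<kappa> x"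
    by (simp add: gen_fps_def icos_prod_fps_refl[OF v] inner_refl_swap algebra_simps)
  also have "\<dots> = fps_const (x \<bullet> y0 - x \<bullet> refl v y0) *
      (fps_X * gen_fps \<kappa> y0 x * neg_binomial_fps 1 (x \<bullet> refl v y0))"
    by (simp add: geometric_fps_diff gen_fps_def mult_ac)
  finally have "fps_const (\<kappa> * v $ i / (x \<bullet> v)) * (gen_fps \<kappa> y0 x - gen_fps \<kappa> y0 (refl v x))
      = fps_const (\<kappa> * v $ i / (x \<bullet> v)) * fps_const (x \<bullet> y0 - x \<bullet> refl v y0) *
        (fps_X * gen_fps \<kappa> y0 x * neg_binomial_fps 1 (x \<bullet> refl v y0))"
    by (simp only: mult.assoc)
  also have "fps_const (\<kappa> * v $ i / (x \<bullet> v)) * fps_const (x \<bullet> y0 - x \<bullet> refl v y0)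
      = fps_const \<kappa> * fps_const ((y0 - refl v y0) $ i)"
    by (simp only: fps_const_mult coeff)
  finally show ?thesis by (simp add: mult_ac)
qed

lemma sum_Rplus_gen_fps_diff:
  assumes y0: "y0 \<in> Icos" and x: "regular x"
  shows "(\<Sum>v\<in>Rplus. fps_const (\<kappa> * v $ i / (x \<bullet> v)) * (gen_fps \<kappa> y0 x - gen_fps \<kappa> y0 (refl v x)))
    = fps_const \<kappa> * fps_X * gen_fps \<kappa> y0 x *
      (fps_const (y0 $ i) * ((\<Sum>y\<in>Icos. neg_binomial_fps 1 (x \<bullet> y)) - 2 * neg_binomial_fps 1 (- (x \<bullet> y0)))
       - (\<Sum>y\<in>Icos. fps_const (y $ i) * neg_binomial_fps 1 (x \<bullet> y)))"
proof -
  define H where "H y = fps_const ((y0 - y) $ i) * neg_binomial_fps 1 (x \<bullet> y)" for y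
  have "(\<Sum>v\<in>Rplus. fps_const (\<kappa> * v $ i / (x \<bullet> v)) * (gen_fps \<kappa> y0 x - gen_fps \<kappa> y0 (refl v x)))
      = fps_const \<kappa> * fps_X * gen_fps \<kappa> y0 x * (\<Sum>v\<in>Rplus. H (refl v y0))"
    using x by (simp add: regular_def gen_fps_refl_diff H_def sum_distrib_left)
  also have "(\<Sum>v\<in>Rplus. H (refl v y0)) = (\<Sum>y\<in>Icos - {y0, - y0}. H y)"
    using y0 by (rule sum_Rplus_refl) (simp add: H_def)
  also have "\<dots> = (\<Sum>y\<in>Icos. H y) - 2 * fps_const (y0 $ i) * neg_binomial_fps 1 (- (x \<bullet> y0))"
  proof -
    have "H y0 = 0" "H (- y0) = 2 * fps_const (y0 $ i) * neg_binomial_fps 1 (- (x \<bullet> y0))"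
      by (simp_all add: H_def fps_numeral_fps_const)
    then show ?thesis using sum_Icos_remove_antipodal[OF y0, of H] by simp
  qed
  also have "(\<Sum>y\<in>Icos. H y) = fps_const (y0 $ i) * (\<Sum>y\<in>Icos. neg_binomial_fps 1 (x \<bullet> y))
      - (\<Sum>y\<in>Icos. fps_const (y $ i) * neg_binomial_fps 1 (x \<bullet> y))"
    by (simp add: H_def algebra_simps sum_subtractf sum_distrib_left flip: fps_const_sub)
  finally show ?thesis by (simp add: algebra_simps)
qed

definition nu_ratio :: "real \<Rightarrow> nat \<Rightarrow> real" where
  "nu_ratio \<kappa> n = of_nat n + 10 * \<kappa> + (if even n then 2 * \<kappa> else 0)"

lemma fps_nu_ratio_shift_eq:
  fixes Q :: "real fps"
  shows "fps_X * fps_deriv (fps_X * Q) + fps_const (10 * \<kappa>) * fps_X * Q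
           + fps_const \<kappa> * fps_X * (Q - (Q oo - fps_X))
         = fps_X * Abs_fps (\<lambda>n. nu_ratio \<kappa> (Suc n) * Q $$ n)"
proof (rule fps_ext)
  fix n
  show "(fps_X * fps_deriv (fps_X * Q) + fps_const (10 * \<kappa>) * fps_X * Q
           + fps_const \<kappa> * fps_X * (Q - (Q oo - fps_X))) $$ n
        = (fps_X * Abs_fps (\<lambda>n. nu_ratio \<kappa> (Suc n) * Q $$ n)) $$ n"
  proof (cases n)
    case (Suc m)
    have "(fps_X * fps_deriv (fps_X * Q)) $$ Suc m = of_nat (Suc m) * Q $$ m"
      by (simp add: algebra_simps)
    moreover have "(fps_const (10 * \<kappa>) * fps_X * Q) $$ Suc m = 10 * \<kappa> * Q $$ m"
      by (simp add: fps_cX_mult_nth)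
    moreover have "(fps_const \<kappa> * fps_X * (Q - (Q oo - fps_X))) $$ Suc m
        = (if even (Suc m) then 2 * \<kappa> else 0) * Q $$ m"
      by (cases "even m") (simp_all add: fps_cX_mult_nth fps_compose_uminus')
    ultimately show ?thesis
      by (simp add: Suc nu_ratio_def algebra_simps del: of_nat_Suc)
  qed simp
qed

lemma gen_fps_dunkl_identity:
  assumes "y0 \<in> Icos" and "regular x"
  shows "gen_fps_partial \<kappa> y0 i x
           + (\<Sum>v\<in>Rplus. fps_const (\<kappa> * v $ i / (x \<bullet> v)) * (gen_fps \<kappa> y0 x - gen_fps \<kappa> y0 (refl v x)))
         = fps_const (y0 $ i) * (fps_X * Abs_fps (\<lambda>n. nu_ratio \<kappa> (Suc n) * gen_fps \<kappa> y0 x $$ n))"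
proof -
  define G where "G = neg_binomial_fps 1 (x \<bullet> y0)"
  define Gm where "Gm = neg_binomial_fps 1 (- (x \<bullet> y0))"
  define P where "P = icos_prod_fps \<kappa> x"
  define S where "S = (\<Sum>y\<in>Icos. neg_binomial_fps 1 (x \<bullet> y))"
  define S1 where "S1 = (\<Sum>y\<in>Icos. fps_const (y $ i) * neg_binomial_fps 1 (x \<bullet> y))"
  define C where "C = fps_const (y0 $ i)"
  define K where "K = fps_const \<kappa>"
  define X where "X = (fps_X :: real fps)"
  define Q where "Q = gen_fps \<kappa> y0 x"
  have Q: "Q = G * P" by (simp add: Q_def G_def P_def gen_fps_def)
  have dP: "X * fps_deriv P = K * P * (S - 12)"
    by (simp add: X_def P_def K_def S_def fps_X_mult_deriv_icos_prod_fps)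
  have dG: "X * fps_deriv G = (G - 1) * G"
    using geometric_fps_cX[of "x \<bullet> y0"]
    by (simp add: X_def G_def fps_deriv_neg_binomial_fps neg_binomial_fps_plus_1[of 1, simplified] mult_ac)
  have antipodal: "2 * (G * Gm) = G + Gm"
    by (simp add: G_def Gm_def geometric_fps_antipodal)
  have compose: "Q oo - fps_X = Gm * P"
    by (simp add: Q G_def Gm_def P_def fps_compose_mult_distrib neg_binomial_fps_compose_uminus
        icos_prod_fps_compose_uminus)
  have "gen_fps_partial \<kappa> y0 i x = X * Q * (C * G + K * S1)"
    by (simp add: gen_fps_partial_def X_def Q_def C_def G_def K_def S1_def)
  moreover have "(\<Sum>v\<in>Rplus. fps_const (\<kappa> * v $ i / (x \<bullet> v)) * (gen_fps \<kappa> y0 x - gen_fps \<kappa> y0 (refl v x)))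
      = K * X * Q * (C * (S - 2 * Gm) - S1)"
    using sum_Rplus_gen_fps_diff[OF assms] by (simp add: K_def X_def Q_def C_def S_def S1_def Gm_def)
  moreover have "X * Abs_fps (\<lambda>n. nu_ratio \<kappa> (Suc n) * Q $$ n)
      = X * fps_deriv (X * Q) + 10 * K * X * Q + K * X * (Q - Gm * P)"
    using fps_nu_ratio_shift_eq[of Q \<kappa>] by (simp add: X_def K_def compose fps_numeral_fps_const)
  moreover have "fps_deriv (X * Q) = Q + X * (fps_deriv G * P + G * fps_deriv P)"
    by (simp add: X_def Q algebra_simps)
  ultimately show ?thesis
    unfolding C_def[symmetric] Q_def[symmetric] X_def[symmetric]
    using dP dG antipodal Q by algebra
qed

section \<open>Dunkl operators on the polynomials \<open>q\<^sub>n\<close>\<close>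

lemma eventually_regular_line:
  assumes "regular x"
  shows "eventually (\<lambda>t. regular (x + t *\<^sub>R axis i 1)) (nhds 0)"
proof -
  have "{t. regular (x + t *\<^sub>R axis i 1)} = (\<Inter>v\<in>Rplus. {t. (x + t *\<^sub>R axis i 1) \<bullet> v \<noteq> 0})"
    by (auto simp: regular_def)
  moreover have "open {t. (x + t *\<^sub>R axis i 1) \<bullet> v \<noteq> 0}" for v
    by (intro open_Collect_neq continuous_intros)
  ultimately have "open {t. regular (x + t *\<^sub>R axis i 1)}"
    using finite_Rplus by (simp add: open_INT)
  moreover have "0 \<in> {t. regular (x + t *\<^sub>R axis i 1)}" using assms by simp
  ultimately show ?thesis using eventually_nhds_in_open by fastforce
qed

text \<open>The Dunkl operators are only meaningful at regular points, where no difference quotient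
  divides by zero; locality lets identities that hold there be iterated.\<close>
lemma dunkl_cong:
  assumes "regular x" and "\<And>z. regular z \<Longrightarrow> f z = g z"
  shows "dunkl \<kappa> i f x = dunkl \<kappa> i g x"
proof -
  have "eventually (\<lambda>t. f (x + t *\<^sub>R axis i 1) = g (x + t *\<^sub>R axis i 1)) (nhds 0)"
    using eventually_regular_line[OF assms(1)] by eventually_elim (rule assms(2))
  then have "partial i f x = partial i g x"
    unfolding partial_def by (rule deriv_cong_ev) simp
  moreover have "f (refl v x) = g (refl v x)" if "v \<in> Rplus" for v
    using assms regular_refl that by blast
  ultimately show ?thesis
    using assms by (simp add: dunkl_def cong: sum.cong)
qed

lemma dunkl_lap_cong:
  assumes "regular x" and "\<And>z. regular z \<Longrightarrow> f z = g z"
  shows "dunkl_lap \<kappa> f x = dunkl_lap \<kappa> g x"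
proof -
  have "dunkl \<kappa> i f z = dunkl \<kappa> i g z" if "regular z" for i z
    using that assms(2) by (rule dunkl_cong)
  then have "dunkl \<kappa> i (dunkl \<kappa> i f) x = dunkl \<kappa> i (dunkl \<kappa> i g) x" for i
    by (rule dunkl_cong[OF assms(1)])
  then show ?thesis by (simp add: dunkl_lap_def)
qed

lemma dunkl_scaled_qpoly:
  assumes "y0 \<in> Icos" and "regular x" and "n \<ge> 1"
  shows "dunkl \<kappa> i (\<lambda>z. c * qpoly \<kappa> n y0 z) x = c * (y0 $ i * nu_ratio \<kappa> n) * qpoly \<kappa> (n - 1) y0 x"
proof -
  let ?Q = "gen_fps \<kappa> y0"
  have "dunkl \<kappa> i (\<lambda>z. c * qpoly \<kappa> n y0 z) x
      = c * (gen_fps_partial \<kappa> y0 i x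
          + (\<Sum>v\<in>Rplus. fps_const (\<kappa> * v $ i / (x \<bullet> v)) * (?Q x - ?Q (refl v x)))) $$ n"
    by (simp add: dunkl_def qpoly_eq_gen_fps_nth partial_scaled_gen_fps_nth fps_sum_nth
        sum_distrib_left algebra_simps diff_divide_distrib)
  also have "\<dots> = c * (fps_const (y0 $ i) * (fps_X * Abs_fps (\<lambda>n. nu_ratio \<kappa> (Suc n) * ?Q x $$ n))) $$ n"
    using assms(1,2) by (simp add: gen_fps_dunkl_identity)
  also have "\<dots> = c * (y0 $ i * nu_ratio \<kappa> n) * qpoly \<kappa> (n - 1) y0 x"
    using assms(3) by (cases n) (simp_all add: qpoly_eq_gen_fps_nth)
  finally show ?thesis .
qed

lemma dunkl_lap_scaled_qpoly:
  assumes "y0 \<in> Icos" and "regular x" and "n \<ge> 2"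
  shows "dunkl_lap \<kappa> (\<lambda>z. c * qpoly \<kappa> n y0 z) x
           = c * ((tau + 2) * nu_ratio \<kappa> n * nu_ratio \<kappa> (n - 1)) * qpoly \<kappa> (n - 2) y0 x"
proof -
  define K where "K = c * nu_ratio \<kappa> n * nu_ratio \<kappa> (n - 1) * qpoly \<kappa> (n - 2) y0 x"
  have "dunkl \<kappa> i (dunkl \<kappa> i (\<lambda>z. c * qpoly \<kappa> n y0 z)) x = y0 $ i * y0 $ i * K" for i
  proof -
    have "dunkl \<kappa> i (dunkl \<kappa> i (\<lambda>z. c * qpoly \<kappa> n y0 z)) x
        = dunkl \<kappa> i (\<lambda>z. c * (y0 $ i * nu_ratio \<kappa> n) * qpoly \<kappa> (n - 1) y0 z) x"
    proof (rule dunkl_cong[OF assms(2)])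
      fix z assume "regular z"
      then show "dunkl \<kappa> i (\<lambda>z. c * qpoly \<kappa> n y0 z) z
          = c * (y0 $ i * nu_ratio \<kappa> n) * qpoly \<kappa> (n - 1) y0 z"
        using assms(1,3) by (simp add: dunkl_scaled_qpoly)
    qed
    also have "\<dots> = c * (y0 $ i * nu_ratio \<kappa> n) * (y0 $ i * nu_ratio \<kappa> (n - 1)) * qpoly \<kappa> (n - 1 - 1) y0 x"
      using assms(3) by (simp add: dunkl_scaled_qpoly[OF assms(1,2)])
    also have "\<dots> = y0 $ i * y0 $ i * K"
      by (simp add: K_def numeral_2_eq_2 mult_ac)
    finally show ?thesis .
  qed
  then have "dunkl_lap \<kappa> (\<lambda>z. c * qpoly \<kappa> n y0 z) x = (\<Sum>i\<in>UNIV. y0 $ i * y0 $ i) * K"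
    by (simp add: dunkl_lap_def sum_distrib_right)
  also have "(\<Sum>i\<in>UNIV. y0 $ i * y0 $ i) = tau + 2"
    using Icos_inner_self[OF assms(1)] by (simp add: inner_vec_def)
  finally show ?thesis by (simp add: K_def mult_ac)
qed

lemma nu_pos: "\<kappa> \<ge> 0 \<Longrightarrow> nu \<kappa> n > 0"
  unfolding nu_def by (intro mult_pos_pos pochhammer_pos) auto

lemma nu_Suc: "nu \<kappa> (Suc n) = nu_ratio \<kappa> (Suc n) * nu \<kappa> n"
proof (cases "even n")
  case True
  then obtain s where "n = 2 * s" by (rule evenE)
  moreover have "Suc (2 * s) div 2 = s" "(2 * s + 2) div 2 = Suc s" "(2 * s + 1) div 2 = s" by simp_all
  ultimately show ?thesis
    by (simp add: nu_def nu_ratio_def pochhammer_Suc field_simps)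
next
  case False
  then obtain s where "n = 2 * s + 1" by (rule oddE)
  moreover have "(2 * s + 2) div 2 = Suc s" "(2 * s + 3) div 2 = Suc s" "(2 * s + 1) div 2 = s" by simp_all
  ultimately show ?thesis
    by (simp add: nu_def nu_ratio_def pochhammer_Suc field_simps)
qed

lemma funpow_dunkl_lap_qpoly:
  assumes "\<kappa> \<ge> 0" and "y0 \<in> Icos" and "2 * m \<le> n" and "regular x"
  shows "(dunkl_lap \<kappa> ^^ m) (qpoly \<kappa> n y0) x
           = nu \<kappa> n / nu \<kappa> (n - 2 * m) * (tau + 2) ^ m * qpoly \<kappa> (n - 2 * m) y0 x"
  using assms(3,4)
proof (induction m arbitrary: x)
  case 0
  then show ?case using nu_pos[OF assms(1), of n] by simp
next
  case (Suc m)
  have nu_step: "nu \<kappa> (n - 2 * m)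
      = nu_ratio \<kappa> (n - 2 * m) * nu_ratio \<kappa> (n - 2 * m - 1) * nu \<kappa> (n - 2 * Suc m)"
  proof -
    have "n - 2 * m = Suc (Suc (n - 2 * Suc m))" using Suc.prems(1) by simp
    then show ?thesis by (simp add: nu_Suc)
  qed
  then have "nu_ratio \<kappa> (n - 2 * m) \<noteq> 0" "nu_ratio \<kappa> (n - 2 * m - 1) \<noteq> 0"
    using nu_pos[OF assms(1), of "n - 2 * m"] by auto
  have "(dunkl_lap \<kappa> ^^ Suc m) (qpoly \<kappa> n y0) x
      = dunkl_lap \<kappa> (\<lambda>z. nu \<kappa> n / nu \<kappa> (n - 2 * m) * (tau + 2) ^ m * qpoly \<kappa> (n - 2 * m) y0 z) x"
    unfolding funpow.simps comp_apply
    by (rule dunkl_lap_cong[OF Suc.prems(2)]) (use Suc.IH Suc.prems(1) in simp)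
  also have "\<dots> = nu \<kappa> n / nu \<kappa> (n - 2 * m) * (tau + 2) ^ m
      * ((tau + 2) * nu_ratio \<kappa> (n - 2 * m) * nu_ratio \<kappa> (n - 2 * m - 1)) * qpoly \<kappa> (n - 2 * m - 2) y0 x"
    by (rule dunkl_lap_scaled_qpoly[OF assms(2) Suc.prems(2)]) (use Suc.prems(1) in simp)
  also have "\<dots> = nu \<kappa> n / nu \<kappa> (n - 2 * Suc m) * (tau + 2) ^ Suc m * qpoly \<kappa> (n - 2 * Suc m) y0 x"
    using \<open>nu_ratio \<kappa> (n - 2 * m) \<noteq> 0\<close> \<open>nu_ratio \<kappa> (n - 2 * m - 1) \<noteq> 0\<close>
    by (simp add: nu_step)
  finally show ?case .
qed

theorem mainTheorem4:
  fixes \<kappa> :: real and y0 :: "real^3"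
  assumes "\<kappa> \<ge> 0" and "y0 \<in> Icos"
  shows "(\<forall>n::nat. n \<ge> 2 \<longrightarrow>
            (\<forall>x. (\<forall>v\<in>Rplus. x \<bullet> v \<noteq> 0) \<longrightarrow>
               dunkl_lap \<kappa> (qpoly \<kappa> n y0) x
                 = nu \<kappa> n / nu \<kappa> (n - 2) * (tau + 2) * qpoly \<kappa> (n - 2) y0 x))
       \<and> (\<forall>n m::nat. 1 \<le> m \<and> 2 * m \<le> n \<longrightarrow>
            (\<forall>x. (\<forall>v\<in>Rplus. x \<bullet> v \<noteq> 0) \<longrightarrow>
               (dunkl_lap \<kappa> ^^ m) (qpoly \<kappa> n y0) x
                 = nu \<kappa> n / nu \<kappa> (n - 2 * m) * (tau + 2) ^ m * qpoly \<kappa> (n - 2 * m) y0 x))"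
proof -
  have lap_power: "(dunkl_lap \<kappa> ^^ m) (qpoly \<kappa> n y0) x
      = nu \<kappa> n / nu \<kappa> (n - 2 * m) * (tau + 2) ^ m * qpoly \<kappa> (n - 2 * m) y0 x"
    if "2 * m \<le> n" and "\<forall>v\<in>Rplus. x \<bullet> v \<noteq> 0" for n m x
    using funpow_dunkl_lap_qpoly[OF assms that(1)] that(2) by (simp add: regular_def)
  show ?thesis
  proof (intro conjI allI impI)
    fix n :: nat and x :: "real^3"
    assume "n \<ge> 2" and "\<forall>v\<in>Rplus. x \<bullet> v \<noteq> 0"
    then show "dunkl_lap \<kappa> (qpoly \<kappa> n y0) x = nu \<kappa> n / nu \<kappa> (n - 2) * (tau + 2) * qpoly \<kappa> (n - 2) y0 x"
      using lap_power[of 1 n x] by simp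
  next
    fix n m :: nat and x :: "real^3"
    assume "1 \<le> m \<and> 2 * m \<le> n" and "\<forall>v\<in>Rplus. x \<bullet> v \<noteq> 0"
    then show "(dunkl_lap \<kappa> ^^ m) (qpoly \<kappa> n y0) x
        = nu \<kappa> n / nu \<kappa> (n - 2 * m) * (tau + 2) ^ m * qpoly \<kappa> (n - 2 * m) y0 x"
      using lap_power by blast
  qed
qed

end
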